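(* Let $r>0$, assume $W$ satisfies (H), and let $u_0(x)=1$ for $x>0$, $u_0(x)=-1$ for $x<0$ (so $\mathcal{E}(u_0)=4/r$). If either $r\in\big(0,\frac{4}{4+c_W}\big)$, or $W$ is differentiable at $\pm1$, then there exists a monotone nondecreasing $v\in L^\infty(\mathbb{R})$ with $\lim_{x\to\pm\infty}v(x)=\pm1$ and $\mathcal{E}(v)<\mathcal{E}(u_0)$; in particular $u_0$ is not a minimizer of $\mathcal{E}$ among monotone nondecreasing functions connecting $-1$ to $1$.
   Context: For an interval $I$ and $u\in L^\infty(I)$, $\operatorname{osc}_I u:=\operatorname{ess\,sup}_I u-\operatorname{ess\,inf}_I u$. $\mathcal{E}(u):=\frac1{2r^2}\int_{\mathbb{R}}(\operatorname{osc}_{(x-r,x+r)}u)^2dx+\int_{\mathbb{R}}W(u(x))dx$. Assumption (H) on $W$: $W\in C(\mathbb{R})$, $W(-1)=W(1)=0<W(t)$ for $t\ne\pm1$; $W$ strictly decreasing on $(-\infty,-1)$, strictly increasing on $(1,+\infty)$; $W$ even on $[-1,1]$ with unique local maximum in $[-1,1]$ at $0$. $c_W:=\int_{-1}^1 W(s)\,ds$. *)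

theory Defs
  imports "HOL-Analysis.Analysis" "HOL-Probability.Essential_Supremum"
begin

definition ess_sup_on :: "real \<Rightarrow> real \<Rightarrow> (real \<Rightarrow> real) \<Rightarrow> ereal" where
  "ess_sup_on a b u = esssup (restrict_space lborel {a<..<b}) (\<lambda>x. ereal (u x))"

definition ess_inf_on :: "real \<Rightarrow> real \<Rightarrow> (real \<Rightarrow> real) \<Rightarrow> ereal" where
  "ess_inf_on a b u = - esssup (restrict_space lborel {a<..<b}) (\<lambda>x. - ereal (u x))"

(* osc_{(a,b)} u = ess sup - ess inf (finite for u in L^infinity) *)
definition osc_on :: "real \<Rightarrow> real \<Rightarrow> (real \<Rightarrow> real) \<Rightarrow> real" where
  "osc_on a b u = real_of_ereal (ess_sup_on a b u - ess_inf_on a b u)"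

definition energy :: "real \<Rightarrow> (real \<Rightarrow> real) \<Rightarrow> (real \<Rightarrow> real) \<Rightarrow> ennreal" where
  "energy r W u =
     ennreal (1 / (2 * r\<^sup>2)) * (\<integral>\<^sup>+ x. ennreal ((osc_on (x - r) (x + r) u)\<^sup>2) \<partial>lborel)
     + (\<integral>\<^sup>+ x. ennreal (W (u x)) \<partial>lborel)"

definition is_local_max_on :: "(real \<Rightarrow> real) \<Rightarrow> real set \<Rightarrow> real \<Rightarrow> bool" where
  "is_local_max_on W S t \<longleftrightarrow> t \<in> S \<and> (\<exists>\<delta>>0. \<forall>y\<in>S. \<bar>y - t\<bar> < \<delta> \<longrightarrow> W y \<le> W t)"

definition hypH :: "(real \<Rightarrow> real) \<Rightarrow> bool" where
  "hypH W \<longleftrightarrow>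
     continuous_on UNIV W \<and>
     W (-1) = 0 \<and> W 1 = 0 \<and> (\<forall>t. t \<noteq> -1 \<and> t \<noteq> 1 \<longrightarrow> W t > 0) \<and>
     strict_antimono_on {..<(-1)} W \<and> strict_mono_on {1<..} W \<and>
     (\<forall>t\<in>{-1..1}. W (-t) = W t) \<and>
     (\<forall>t\<in>{-1..1}. is_local_max_on W {-1..1} t \<longleftrightarrow> t = 0)"

definition c_W :: "(real \<Rightarrow> real) \<Rightarrow> real" where
  "c_W W = integral {-1..1} W"

definition u0 :: "real \<Rightarrow> real" where
  "u0 x = (if x > 0 then 1 else -1)"

end

theory Submission
  imports Defs
begin

text \<open>
  Insert an intermediate step of width \<open>r\<close> at a level \<open>m \<in> (-1,1)\<close> into \<open>u0\<close>.
  The oscillation term then costs \<open>(3 + m\<^sup>2)/r\<close> instead of \<open>4/r\<close>, while the potential term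
  costs \<open>r W(m)\<close>; so the step pays off as soon as \<open>W(m) < (1 - m\<^sup>2)/r\<^sup>2\<close>.
  If \<open>W\<close> is differentiable at \<open>1\<close>, then \<open>W'(1) = 0\<close> (a minimum), so such an \<open>m\<close> exists close
  to \<open>1\<close>. Otherwise, \<open>W \<ge> (1 - m\<^sup>2)/r\<^sup>2\<close> on \<open>[-1,1]\<close> would give \<open>c_W \<ge> 4/(3r\<^sup>2)\<close>, and
  then \<open>r < 4/(4 + c_W)\<close> forces \<open>3(2r - 1)\<^sup>2 < 0\<close>.
\<close>

lemma esssup_restrict_interval_eq:
  fixes u :: "real \<Rightarrow> real"
  assumes "u \<in> borel_measurable lborel"
    and "\<forall>x\<in>{a<..<b}. u x \<le> c"
    and "a \<le> s" "s < t" "t \<le> b" "\<forall>x\<in>{s<..<t}. u x = c"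
  shows "esssup (restrict_space lborel {a<..<b}) (\<lambda>x. ereal (u x)) = ereal c"
proof -
  let ?M = "restrict_space lborel {a<..<b}"
  have meas: "(\<lambda>x. ereal (u x)) \<in> borel_measurable ?M"
    using assms(1) by (intro measurable_restrict_space1 borel_measurable_ereal) simp
  have le: "esssup ?M (\<lambda>x. ereal (u x)) \<le> ereal c"
    by (rule esssup_I[OF meas]) (rule AE_I2, use assms(2) in auto)
  have "\<not> esssup ?M (\<lambda>x. ereal (u x)) < ereal c"
  proof
    assume lt: "esssup ?M (\<lambda>x. ereal (u x)) < ereal c"
    have "AE x in ?M. ereal (u x) \<le> esssup ?M (\<lambda>x. ereal (u x))"
      by (rule esssup_AE)
    then have "AE x in ?M. x \<notin> {s<..<t}"
      by eventually_elim (use lt assms(6) in force)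
    then have "AE x in lborel. x \<in> {a<..<b} \<longrightarrow> x \<notin> {s<..<t}"
      by (subst (asm) AE_restrict_space_iff) auto
    then have "AE x in lborel. x \<notin> {s<..<t}"
      by eventually_elim (use assms(3,5) in auto)
    then have "emeasure lborel {s<..<t} = 0"
      by (subst (asm) AE_iff_measurable[of "{s<..<t}"]) auto
    then show False
      using assms(4) by simp
  qed
  with le show ?thesis
    by simp
qed

lemma osc_on_eq_of_attained:
  fixes u :: "real \<Rightarrow> real"
  assumes "u \<in> borel_measurable lborel"
    and "\<forall>x\<in>{a<..<b}. lo \<le> u x \<and> u x \<le> hi"
    and "a \<le> s" "s < t" "t \<le> b" "\<forall>x\<in>{s<..<t}. u x = hi"
    and "a \<le> s'" "s' < t'" "t' \<le> b" "\<forall>x\<in>{s'<..<t'}. u x = lo"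
  shows "osc_on a b u = hi - lo"
proof -
  have sup: "ess_sup_on a b u = ereal hi"
    unfolding ess_sup_on_def using assms by (intro esssup_restrict_interval_eq) auto
  have "esssup (restrict_space lborel {a<..<b}) (\<lambda>x. ereal (- u x)) = ereal (- lo)"
    using assms by (intro esssup_restrict_interval_eq) auto
  then have inf: "ess_inf_on a b u = ereal lo"
    unfolding ess_inf_on_def by simp
  show ?thesis
    unfolding osc_on_def sup inf by simp
qed

lemma osc_on_const:
  fixes u :: "real \<Rightarrow> real"
  assumes "u \<in> borel_measurable lborel" "a < b" "\<forall>x\<in>{a<..<b}. u x = c"
  shows "osc_on a b u = 0"
  using osc_on_eq_of_attained[of u a b c c a b a b] assms by simp

definition three_step :: "real \<Rightarrow> real \<Rightarrow> real \<Rightarrow> real" where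
  "three_step r m x = (if x < 0 then -1 else if x < r then m else 1)"

lemma mono_three_step: "-1 \<le> m \<Longrightarrow> m \<le> 1 \<Longrightarrow> mono (three_step r m)"
  unfolding mono_def three_step_def by auto

lemma mono_u0: "mono u0"
  unfolding mono_def u0_def by auto

lemma osc_on_three_step:
  assumes "0 < r" "-1 < m" "m < 1"
  shows "osc_on (x - r) (x + r) (three_step r m) =
    (if x \<le> -r then 0 else if x \<le> 0 then 1 + m else if x < r then 2
     else if x < 2 * r then 1 - m else 0)"
proof -
  have meas: "three_step r m \<in> borel_measurable lborel"
    using borel_measurable_mono mono_three_step assms by simp
  consider "x \<le> -r" | "-r < x" "x \<le> 0" | "0 < x" "x < r" | "r \<le> x" "x < 2 * r"
    | "2 * r \<le> x"
    by linarith
  then show ?thesis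
  proof cases
    case 1
    then show ?thesis
      using assms by (simp add: osc_on_const[OF meas, of _ _ "-1"] three_step_def)
  next
    case 2
    have "osc_on (x - r) (x + r) (three_step r m) = m - -1"
      by (rule osc_on_eq_of_attained[where s=0 and t="x + r" and s'="x - r" and t'=0])
        (use meas assms 2 in \<open>auto simp: three_step_def\<close>)
    then show ?thesis
      using 2 assms by simp
  next
    case 3
    have "osc_on (x - r) (x + r) (three_step r m) = 1 - -1"
      by (rule osc_on_eq_of_attained[where s=r and t="x + r" and s'="x - r" and t'=0])
        (use meas assms 3 in \<open>auto simp: three_step_def\<close>)
    then show ?thesis
      using 3 assms by simp
  next
    case 4
    have "osc_on (x - r) (x + r) (three_step r m) = 1 - m"
      by (rule osc_on_eq_of_attained[where s=r and t="x + r" and s'="x - r" and t'=r])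
        (use meas assms 4 in \<open>auto simp: three_step_def\<close>)
    then show ?thesis
      using 4 assms by simp
  next
    case 5
    then show ?thesis
      using assms by (simp add: osc_on_const[OF meas, of _ _ 1] three_step_def)
  qed
qed

lemma osc_on_u0:
  assumes "0 < r"
  shows "osc_on (x - r) (x + r) u0 = (if -r < x \<and> x < r then 2 else 0)"
proof -
  have meas: "u0 \<in> borel_measurable lborel"
    using borel_measurable_mono[OF mono_u0] by simp
  consider "x \<le> -r" | "-r < x" "x < r" | "r \<le> x"
    by linarith
  then show ?thesis
  proof cases
    case 1
    then show ?thesis
      using assms by (simp add: osc_on_const[OF meas, of _ _ "-1"] u0_def)
  next
    case 2
    have "osc_on (x - r) (x + r) u0 = 1 - -1"
      by (rule osc_on_eq_of_attained[where s=0 and t="x + r" and s'="x - r" and t'=0])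
        (use meas 2 in \<open>auto simp: u0_def\<close>)
    then show ?thesis
      using 2 by simp
  next
    case 3
    then show ?thesis
      using assms by (simp add: osc_on_const[OF meas, of _ _ 1] u0_def)
  qed
qed

lemma energy_three_step:
  assumes "0 < r" "-1 < m" "m < 1" "W (-1) = 0" "W 1 = 0" "0 \<le> W m"
  shows "energy r W (three_step r m) = ennreal ((3 + m\<^sup>2) / r + r * W m)"
proof -
  have osc: "ennreal ((osc_on (x - r) (x + r) (three_step r m))\<^sup>2) =
      ennreal ((1 + m)\<^sup>2) * indicator {-r<..0} x + ennreal 4 * indicator {0<..<r} x
      + ennreal ((1 - m)\<^sup>2) * indicator {r..<2 * r} x" for x
    using assms by (simp add: osc_on_three_step indicator_def)
  have "(\<integral>\<^sup>+ x. ennreal ((osc_on (x - r) (x + r) (three_step r m))\<^sup>2) \<partial>lborel)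
      = ennreal ((1 + m)\<^sup>2) * ennreal r + ennreal 4 * ennreal r + ennreal ((1 - m)\<^sup>2) * ennreal r"
    using assms(1) by (simp add: osc nn_integral_add nn_integral_cmult_indicator)
  also have "\<dots> = ennreal ((1 + m)\<^sup>2 * r) + ennreal (4 * r) + ennreal ((1 - m)\<^sup>2 * r)"
    using assms(1)
    by (simp add: ennreal_mult[symmetric] ennreal_numeral[symmetric] del: ennreal_numeral)
  also have "\<dots> = ennreal ((1 + m)\<^sup>2 * r + 4 * r + (1 - m)\<^sup>2 * r)"
    using assms(1) by (simp add: ennreal_plus[symmetric] del: ennreal_plus)
  also have "\<dots> = ennreal (2 * r * (3 + m\<^sup>2))"
    by (simp add: power2_eq_square algebra_simps)
  finally have int_osc: "(\<integral>\<^sup>+ x. ennreal ((osc_on (x - r) (x + r) (three_step r m))\<^sup>2) \<partial>lborel)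
      = ennreal (2 * r * (3 + m\<^sup>2))" .
  have "ennreal (W (three_step r m x)) = ennreal (W m) * indicator {0..<r} x" for x
    using assms by (simp add: three_step_def indicator_def)
  then have int_W: "(\<integral>\<^sup>+ x. ennreal (W (three_step r m x)) \<partial>lborel) = ennreal (r * W m)"
    using assms by (simp add: nn_integral_cmult_indicator ennreal_mult[symmetric] mult.commute)
  have "(3 + m\<^sup>2) / r = 1 / (2 * r\<^sup>2) * (2 * r * (3 + m\<^sup>2))"
    using assms(1) by (simp add: power2_eq_square)
  then show ?thesis
    unfolding energy_def int_osc int_W using assms
    by (simp add: ennreal_mult[symmetric] ennreal_plus[symmetric] del: ennreal_plus)
qed

lemma energy_u0:
  assumes "0 < r" "W (-1) = 0" "W 1 = 0"
  shows "energy r W u0 = ennreal (4 / r)"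
proof -
  have "ennreal ((osc_on (x - r) (x + r) u0)\<^sup>2) = ennreal 4 * indicator {-r<..<r} x" for x
    using assms by (simp add: osc_on_u0 indicator_def)
  then have int_osc: "(\<integral>\<^sup>+ x. ennreal ((osc_on (x - r) (x + r) u0)\<^sup>2) \<partial>lborel) = ennreal (8 * r)"
    using assms by (simp add: nn_integral_cmult_indicator ennreal_mult[symmetric]
        ennreal_numeral[symmetric] del: ennreal_numeral)
  have "(\<lambda>x. ennreal (W (u0 x))) = (\<lambda>_. 0)"
    using assms by (auto simp: u0_def)
  then show ?thesis
    unfolding energy_def int_osc using assms
    by (simp add: ennreal_mult[symmetric] power2_eq_square)
qed

lemma energy_three_step_less_u0:
  assumes "0 < r" "-1 < m" "m < 1" "W (-1) = 0" "W 1 = 0" "0 \<le> W m"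
    and "W m < (1 - m\<^sup>2) / r\<^sup>2"
  shows "energy r W (three_step r m) < energy r W u0"
proof -
  have "r * W m < r * ((1 - m\<^sup>2) / r\<^sup>2)"
    using assms by (intro mult_strict_left_mono) auto
  also have "\<dots> = 4 / r - (3 + m\<^sup>2) / r"
    using assms(1) by (simp add: field_simps power2_eq_square)
  finally have "(3 + m\<^sup>2) / r + r * W m < 4 / r"
    by linarith
  moreover have "0 \<le> (3 + m\<^sup>2) / r + r * W m"
    using assms by simp
  ultimately show ?thesis
    unfolding energy_three_step[OF assms(1-6)] energy_u0[OF assms(1,4,5)]
    by (subst ennreal_less_iff) auto
qed

lemma exists_below_parabola_of_differentiable:
  fixes W :: "real \<Rightarrow> real"
  assumes "0 < r" "W 1 = 0" "\<forall>t. 0 \<le> W t" "W differentiable (at 1)"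
  shows "\<exists>m. -1 < m \<and> m < 1 \<and> W m < (1 - m\<^sup>2) / r\<^sup>2"
proof -
  obtain D where D: "(W has_real_derivative D) (at 1)"
    using assms(4) by (auto simp: real_differentiable_def)
  have "D = 0"
    by (rule DERIV_local_min[OF D, of 1]) (use assms in auto)
  then have "((\<lambda>h. W (1 + h) / h) \<longlongrightarrow> 0) (at 0)"
    using DERIV_D[OF D] assms(2) by simp
  then have "((\<lambda>h. W (1 + h) / h) \<longlongrightarrow> 0) (at_left 0)"
    by (rule tendsto_mono[OF at_le, rotated]) simp
  then have "\<forall>\<^sub>F h in at_left 0. -1 / r\<^sup>2 < W (1 + h) / h"
    using assms(1) by (intro order_tendstoD(1)) auto
  moreover have "\<forall>\<^sub>F h in at_left 0. h \<in> {-1<..<0::real}"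
    by (rule eventually_at_left_real) simp
  ultimately have "\<forall>\<^sub>F h in at_left 0. -1 / r\<^sup>2 < W (1 + h) / h \<and> h \<in> {-1<..<0::real}"
    by (rule eventually_conj)
  then obtain h where h: "-1 < h" "h < 0" and "-1 / r\<^sup>2 < W (1 + h) / h"
    using eventually_happens'[OF trivial_limit_at_left_real] by auto
  then have "W (1 + h) < -h / r\<^sup>2"
    using assms(1) by (simp add: field_simps)
  also have "\<dots> \<le> (1 - (1 + h)\<^sup>2) / r\<^sup>2"
    using h mult_nonpos_nonneg[of h "1 + h"]
    by (intro divide_right_mono) (auto simp: power2_eq_square algebra_simps)
  finally show ?thesis
    using h by (intro exI[of _ "1 + h"]) auto
qed

lemma c_W_ge_of_ge_parabola:
  assumes "continuous_on {-1..1} W" "\<forall>m\<in>{-1..1}. c * (1 - m\<^sup>2) \<le> W m"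
  shows "4 * c / 3 \<le> c_W W"
proof -
  have "((\<lambda>m. c * (m - m ^ 3 / 3)) has_real_derivative c * (1 - m\<^sup>2)) (at m within {-1..1})"
    for m
    by (auto intro!: derivative_eq_intros simp: power2_eq_square)
  then have "((\<lambda>m. c * (1 - m\<^sup>2)) has_integral
      (c * (1 - 1 ^ 3 / 3) - c * (-1 - (-1) ^ 3 / 3))) {-1..1}"
    by (intro fundamental_theorem_of_calculus)
      (auto simp: has_real_derivative_iff_has_vector_derivative)
  then have parabola: "((\<lambda>m. c * (1 - m\<^sup>2)) has_integral 4 * c / 3) {-1..1}"
    by (simp add: field_simps)
  have "W integrable_on {-1..1}"
    using assms(1) by (rule integrable_continuous_interval)
  then show ?thesis
    unfolding c_W_def
    by (rule has_integral_le[OF parabola integrable_integral]) (use assms(2) in auto)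
qed

lemma exists_below_parabola_of_small_radius:
  assumes "0 < r" "continuous_on {-1..1} W" "0 \<le> W (-1)" "0 \<le> W 1"
    and "r < 4 / (4 + c_W W)"
  shows "\<exists>m. -1 < m \<and> m < 1 \<and> W m < (1 - m\<^sup>2) / r\<^sup>2"
proof (rule ccontr)
  assume none: "\<not> ?thesis"
  have "1 / r\<^sup>2 * (1 - m\<^sup>2) \<le> W m" if "m \<in> {-1..1}" for m
  proof (cases "m = -1 \<or> m = 1")
    case True
    then show ?thesis
      using assms(3,4) by auto
  next
    case False
    with that have "-1 < m" "m < 1"
      by auto
    with none have "\<not> W m < (1 - m\<^sup>2) / r\<^sup>2"
      by blast
    then show ?thesis
      by simp
  qed
  then have "4 * (1 / r\<^sup>2) / 3 \<le> c_W W"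
    by (intro c_W_ge_of_ge_parabola[OF assms(2)]) auto
  then have c_W_ge: "4 / (3 * r) \<le> r * c_W W"
    using assms(1) mult_left_mono[of "4 * (1 / r\<^sup>2) / 3" "c_W W" r]
    by (simp add: power2_eq_square)
  moreover have "0 < 4 / (3 * r)"
    using assms(1) by simp
  ultimately have "0 < r * c_W W"
    by linarith
  then have "0 < 4 + c_W W"
    using assms(1) by (simp add: zero_less_mult_iff)
  then have "4 * r + r * c_W W < 4"
    using assms(5) by (simp add: field_simps)
  with c_W_ge have "4 * r + 4 / (3 * r) < 4"
    by linarith
  then have "3 * r * (4 * r + 4 / (3 * r)) < 3 * r * 4"
    using assms(1) by (intro mult_strict_left_mono) auto
  then have "12 * r\<^sup>2 + 4 < 12 * r"
    using assms(1) by (simp add: algebra_simps power2_eq_square)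
  moreover have "0 \<le> (2 * r - 1)\<^sup>2"
    by simp
  ultimately show False
    by (simp add: power2_eq_square algebra_simps)
qed

lemma hypH_nonneg:
  assumes "hypH W"
  shows "0 \<le> W t"
proof -
  have "W (-1) = 0" "W 1 = 0" "\<forall>t. t \<noteq> -1 \<and> t \<noteq> 1 \<longrightarrow> W t > 0"
    using assms unfolding hypH_def by blast+
  then show ?thesis
    by (cases "t = -1 \<or> t = 1") (auto intro: less_imp_le)
qed

lemma exists_below_parabola:
  assumes "0 < r" "hypH W"
    and "r < 4 / (4 + c_W W) \<or> W differentiable (at 1)"
  shows "\<exists>m. -1 < m \<and> m < 1 \<and> W m < (1 - m\<^sup>2) / r\<^sup>2"
proof -
  have W: "W (-1) = 0" "W 1 = 0" "continuous_on UNIV W"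
    using assms(2) unfolding hypH_def by blast+
  show ?thesis
    using assms(3)
  proof
    assume "r < 4 / (4 + c_W W)"
    then show ?thesis
      using exists_below_parabola_of_small_radius[OF assms(1) continuous_on_subset[OF W(3)]] W(1,2)
      by simp
  next
    assume "W differentiable (at 1)"
    then show ?thesis
      using exists_below_parabola_of_differentiable[of r W] assms(1) W(2) hypH_nonneg[OF assms(2)]
      by blast
  qed
qed

lemma tendsto_three_step_at_top: "0 \<le> r \<Longrightarrow> (three_step r m \<longlongrightarrow> 1) at_top"
  by (rule tendsto_eventually, rule eventually_at_top_linorderI[of r]) (auto simp: three_step_def)

lemma tendsto_three_step_at_bot: "(three_step r m \<longlongrightarrow> -1) at_bot"
  by (rule tendsto_eventually, rule eventually_at_bot_linorderI[of "-1"]) (auto simp: three_step_def)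

theorem proposition1p2:
  fixes r :: real and W :: "real \<Rightarrow> real"
  assumes "r > 0" and "hypH W"
    and "r < 4 / (4 + c_W W) \<or> (W differentiable (at (-1)) \<and> W differentiable (at 1))"
  shows "\<exists>v :: real \<Rightarrow> real. mono v \<and> v \<in> borel_measurable lborel \<and>
           (\<exists>B. \<forall>x. \<bar>v x\<bar> \<le> B) \<and>
           (v \<longlongrightarrow> 1) at_top \<and> (v \<longlongrightarrow> -1) at_bot \<and>
           energy r W v < energy r W u0"
proof -
  obtain m where m: "-1 < m" "m < 1" "W m < (1 - m\<^sup>2) / r\<^sup>2"
    using exists_below_parabola[OF assms(1,2)] assms(3) by blast
  have W: "W (-1) = 0" "W 1 = 0"
    using assms(2) unfolding hypH_def by blast+
  have mono: "mono (three_step r m)"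
    using m by (intro mono_three_step) auto
  moreover have "three_step r m \<in> borel_measurable lborel"
    using borel_measurable_mono[OF mono] by simp
  moreover have "\<forall>x. \<bar>three_step r m x\<bar> \<le> 1"
    using m by (auto simp: three_step_def)
  moreover have "energy r W (three_step r m) < energy r W u0"
    using energy_three_step_less_u0[OF assms(1) m(1,2) W hypH_nonneg[OF assms(2)] m(3)] .
  ultimately show ?thesis
    using tendsto_three_step_at_top[of r m] tendsto_three_step_at_bot[of r m] assms(1)
    by (intro exI[of _ "three_step r m"]) auto
qed

end
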